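(* Let $n\ge 2$ and let $d=(d_1,\dots,d_n)$ with $d_1=\tfrac34$, $d_2=\tfrac14$ and $d_i=0$ for $3\le i\le n$. Then for every simple game $\chi$ on $N=\{1,\dots,n\}$, $$\|\mathcal{BZ}(\chi)-d\|_1=\sum_{i=1}^n\left|\mathcal{BZ}(\chi,i)-d_i\right|\ge\frac19.$$
   Context: A simple game on $N=\{1,\dots,n\}$ is a monotone Boolean function $\chi:2^N\to\{0,1\}$ with $\chi(\emptyset)=0$ and $\chi(N)=1$. An $i$-swing is a set $U\subseteq N\setminus\{i\}$ with $\chi(U)=0$ and $\chi(U\cup\{i\})=1$. The Banzhaf index is $\mathcal{BZ}(\chi,i)=\eta_i/\sum_{k=1}^n\eta_k$, where $\eta_i$ is the number of $i$-swings, and $\mathcal{BZ}(\chi)=(\mathcal{BZ}(\chi,1),\dots,\mathcal{BZ}(\chi,n))$. *)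

theory Defs
  imports Complex_Main
begin

definition simple_game :: "nat \<Rightarrow> (nat set \<Rightarrow> bool) \<Rightarrow> bool" where
  "simple_game n \<chi> \<longleftrightarrow>
     (\<forall>S T. S \<subseteq> T \<and> T \<subseteq> {1..n} \<longrightarrow> \<chi> S \<longrightarrow> \<chi> T) \<and>
     \<not> \<chi> {} \<and> \<chi> {1..n}"

definition swings :: "nat \<Rightarrow> (nat set \<Rightarrow> bool) \<Rightarrow> nat \<Rightarrow> nat" where
  "swings n \<chi> i = card {U. U \<subseteq> {1..n} - {i} \<and> \<not> \<chi> U \<and> \<chi> (insert i U)}"

definition banzhaf :: "nat \<Rightarrow> (nat set \<Rightarrow> bool) \<Rightarrow> nat \<Rightarrow> real" where
  "banzhaf n \<chi> i = real (swings n \<chi> i) / (\<Sum>k\<in>{1..n}. real (swings n \<chi> k))"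

end

theory Submission
  imports Defs
begin

(*
  Fix two distinct players a, b and let M = N - {a,b}, K = 2^|M|.  For
  a subset U of M, whether U, U+a, U+b, U+a+b win is recorded by four counts
  f0, fa, fb, fab of winning subsets of M.  By monotonicity the swing numbers of a and
  b are  eta_a = fa - f0 + fab - fb  and  eta_b = fb - f0 + fab - fa,  so
  eta_a - eta_b = 2 (fa - fb).  Every other player j swings whenever it changes the
  outcome of one of the two restricted games U |-> chi(U+a), U |-> chi(U+b), so the
  swings of the players in M bound the edge boundaries of these two games on the cube
  of subsets of M.  The edge-isoperimetric inequality  2 f (K - f) <= K * boundary
  then gives  S * K >= 2 fa (K - fa) + 2 fb (K - fb)  for S = sum of the other swings.
  A purely real-arithmetic case analysis turns these facts into
  H <= 9 (|eta_a - 3H/4| + |eta_b - H/4| + S),  H = total number of swings, and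
  dividing by H yields the theorem for (a,b) = (1,2).
*)

definition subset_count :: "'a set \<Rightarrow> ('a set \<Rightarrow> bool) \<Rightarrow> nat" where
  "subset_count M P = card {U. U \<subseteq> M \<and> P U}"

lemma finite_subsets_with: "finite M \<Longrightarrow> finite {U. U \<subseteq> M \<and> P U}"
  by (rule finite_subset[of _ "Pow M"]) auto

lemma subset_count_split:
  assumes "finite A" "a \<in> A"
  shows "subset_count A P = subset_count (A - {a}) P + subset_count (A - {a}) (\<lambda>U. P (insert a U))"
proof -
  let ?without = "{U. U \<subseteq> A - {a} \<and> P U}"
  let ?with = "{U. U \<subseteq> A - {a} \<and> P (insert a U)}"
  have eq: "{U. U \<subseteq> A \<and> P U} = ?without \<union> insert a ` ?with"
  proof (intro set_eqI iffI)
    fix U assume U: "U \<in> {U. U \<subseteq> A \<and> P U}"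
    show "U \<in> ?without \<union> insert a ` ?with"
    proof (cases "a \<in> U")
      case True
      then have "U = insert a (U - {a})" and "U - {a} \<in> ?with"
        using U by (auto simp: insert_absorb)
      then show ?thesis by blast
    qed (use U in auto)
  qed (use assms(2) in auto)
  have inj: "inj_on (insert a) ?with"
    by (rule inj_onI) (metis Diff_insert_absorb mem_Collect_eq subset_Diff_insert)
  have "card (?without \<union> insert a ` ?with) = card ?without + card (insert a ` ?with)"
    by (rule card_Un_disjoint) (use assms(1) finite_subsets_with in auto)
  then show ?thesis
    unfolding subset_count_def eq using card_image[OF inj] by simp
qed

lemma subset_count_le_pow: "finite M \<Longrightarrow> subset_count M P \<le> 2 ^ card M"
  unfolding subset_count_def
  by (metis (no_types, lifting) Pow_iff card_Pow card_mono finite_Pow_iff mem_Collect_eq subsetI)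

lemma subset_count_mono:
  "finite M \<Longrightarrow> (\<And>U. U \<subseteq> M \<Longrightarrow> P U \<Longrightarrow> Q U) \<Longrightarrow> subset_count M P \<le> subset_count M Q"
  unfolding subset_count_def by (rule card_mono) (auto intro: finite_subsets_with)

lemma subset_count_cong:
  "(\<And>U. U \<subseteq> M \<Longrightarrow> P U = Q U) \<Longrightarrow> subset_count M P = subset_count M Q"
  unfolding subset_count_def by (metis (mono_tags, lifting))

lemma subset_count_disj_le:
  "subset_count M (\<lambda>U. P U \<or> Q U) \<le> subset_count M P + subset_count M Q"
proof -
  have "{U. U \<subseteq> M \<and> (P U \<or> Q U)} = {U. U \<subseteq> M \<and> P U} \<union> {U. U \<subseteq> M \<and> Q U}" by auto
  then show ?thesis unfolding subset_count_def using card_Un_le by simp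
qed

lemma subset_count_diff:
  assumes "finite M" "\<And>U. U \<subseteq> M \<Longrightarrow> P U \<Longrightarrow> Q U"
  shows "int (subset_count M (\<lambda>U. \<not> P U \<and> Q U)) = int (subset_count M Q) - int (subset_count M P)"
proof -
  have eq: "{U. U \<subseteq> M \<and> \<not> P U \<and> Q U} = {U. U \<subseteq> M \<and> Q U} - {U. U \<subseteq> M \<and> P U}" by auto
  have sub: "{U. U \<subseteq> M \<and> P U} \<subseteq> {U. U \<subseteq> M \<and> Q U}" using assms(2) by auto
  have fin: "finite {U. U \<subseteq> M \<and> P U}" using finite_subsets_with[OF assms(1)] .
  show ?thesis
    unfolding subset_count_def eq
    using card_Diff_subset[OF fin sub] card_mono[OF finite_subsets_with[OF assms(1)] sub]
    by simp
qed

section \<open>The edge-isoperimetric inequality on the cube\<close>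

text \<open>The edge boundary of a Boolean function G on the subsets of M: the number of
  cube edges (U, U + j) along which G changes its value.\<close>
definition boundary :: "'a set \<Rightarrow> ('a set \<Rightarrow> bool) \<Rightarrow> nat" where
  "boundary M G = (\<Sum>j\<in>M. subset_count (M - {j}) (\<lambda>U. G U \<noteq> G (insert j U)))"

text \<open>The arithmetic of the induction step: the two half-cubes (sizes N) contain x and y
  winning sets, and the d edges between them change value at least |x - y| times.\<close>
lemma isoperimetric_step_arith:
  fixes x y b0 b1 d N :: real
  assumes "0 \<le> x" "x \<le> N" "0 \<le> y" "y \<le> N" "x - y \<le> d" "y - x \<le> d"
    and "2*x*(N-x) \<le> b0*N" "2*y*(N-y) \<le> b1*N"
  shows "2*(x+y)*(2*N - (x+y)) \<le> (d + b0 + b1) * (2*N)"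
proof -
  have split: "(x+y)*(2*N-(x+y)) = 2*x*(N-x) + 2*y*(N-y) + \<bar>x-y\<bar>*\<bar>x-y\<bar>"
    by (simp add: algebra_simps)
  have "\<bar>x-y\<bar>*\<bar>x-y\<bar> \<le> d*N"
    using assms by (intro mult_mono) auto
  then show ?thesis using split assms(7,8) by (simp add: algebra_simps)
qed

lemma edge_isoperimetric:
  assumes "finite M"
  shows "2 * real (subset_count M G) * (2 ^ card M - real (subset_count M G))
           \<le> real (boundary M G) * 2 ^ card M"
  using assms
proof (induction M arbitrary: G rule: finite_induct)
  case empty
  have "subset_count {} G \<le> 1" using subset_count_le_pow[of "{}" G] by simp
  then have "subset_count {} G = 0 \<or> subset_count {} G = 1" by auto
  then show ?case by (auto simp: boundary_def)
next
  case (insert a M)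
  define G1 where "G1 = (\<lambda>U. G (insert a U))"
  let ?x = "subset_count M G" and ?y = "subset_count M G1"
  let ?d = "subset_count M (\<lambda>U. G U \<noteq> G (insert a U))"
  have AM: "insert a M - {a} = M" using insert.hyps by auto
  have count: "subset_count (insert a M) G = ?x + ?y"
    using subset_count_split[of "insert a M" a G] insert.hyps AM by (simp add: G1_def)
  text \<open>Each edge in direction j \<noteq> a lies in one of the two half-cubes.\<close>
  have edges_j: "subset_count (insert a M - {j}) (\<lambda>U. G U \<noteq> G (insert j U))
      = subset_count (M - {j}) (\<lambda>U. G U \<noteq> G (insert j U))
        + subset_count (M - {j}) (\<lambda>U. G1 U \<noteq> G1 (insert j U))" if j: "j \<in> M" for j
  proof -
    have "insert a M - {j} - {a} = M - {j}" using insert.hyps j by auto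
    moreover have "a \<in> insert a M - {j}" using insert.hyps j by auto
    ultimately show ?thesis
      using subset_count_split[of "insert a M - {j}" a] insert.hyps(1)
      by (simp add: G1_def insert_commute[of j a])
  qed
  have "boundary (insert a M) G
      = ?d + (\<Sum>j\<in>M. subset_count (insert a M - {j}) (\<lambda>U. G U \<noteq> G (insert j U)))"
    unfolding boundary_def using insert.hyps AM by simp
  also have "\<dots> = ?d + (boundary M G + boundary M G1)"
    unfolding boundary_def sum.distrib[symmetric] by (intro arg_cong2[where f=plus] refl sum.cong edges_j)
  finally have bd: "boundary (insert a M) G = ?d + boundary M G + boundary M G1" by simp
  have "?x \<le> subset_count M (\<lambda>U. (G U \<noteq> G (insert a U)) \<or> G1 U)"
    using insert.hyps by (intro subset_count_mono) (auto simp: G1_def)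
  then have x_le: "?x \<le> ?d + ?y" using subset_count_disj_le by (rule order_trans)
  have "?y \<le> subset_count M (\<lambda>U. (G U \<noteq> G (insert a U)) \<or> G U)"
    using insert.hyps by (intro subset_count_mono) (auto simp: G1_def)
  then have y_le: "?y \<le> ?d + ?x" using subset_count_disj_le by (rule order_trans)
  have bounds: "real (subset_count M P) \<le> 2 ^ card M" for P
    using subset_count_le_pow[OF insert.hyps(1), of P] by (simp add: of_nat_le_iff[symmetric])
  have "2 * (real ?x + real ?y) * (2 * 2 ^ card M - (real ?x + real ?y))
      \<le> (real ?d + real (boundary M G) + real (boundary M G1)) * (2 * 2 ^ card M)"
    by (rule isoperimetric_step_arith)
      (use x_le y_le insert.IH[of G] insert.IH[of G1] bounds in simp_all)
  then show ?case using count bd insert.hyps by (simp add: algebra_simps)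
qed

section \<open>Swings in a simple game\<close>

lemma swings_eq_subset_count:
  "swings n \<chi> i = subset_count ({1..n} - {i}) (\<lambda>U. \<not> \<chi> U \<and> \<chi> (insert i U))"
  unfolding swings_def subset_count_def by simp

lemma simple_game_insert:
  assumes "simple_game n \<chi>" "U \<subseteq> {1..n}" "a \<in> {1..n}" "\<chi> U"
  shows "\<chi> (insert a U)"
  using assms unfolding simple_game_def by (metis insert_subset subset_insertI)

lemma swings_via_pair:
  assumes game: "simple_game n \<chi>" and a: "a \<in> {1..n}" and b: "b \<in> {1..n}" and "a \<noteq> b"
  defines "M \<equiv> {1..n} - {a, b}"
  shows "int (swings n \<chi> a)
    = int (subset_count M (\<lambda>U. \<chi> (insert a U))) - int (subset_count M \<chi>)
      + int (subset_count M (\<lambda>U. \<chi> (insert a (insert b U))))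
      - int (subset_count M (\<lambda>U. \<chi> (insert b U)))"
proof -
  have fin: "finite M" by (simp add: M_def)
  have win_insert: "\<chi> (insert c U)" if "U \<subseteq> M" "c \<in> {1..n}" "\<chi> U" for U c
    using simple_game_insert[OF game _ that(2,3)] that(1) by (auto simp: M_def)
  have "M = {1..n} - {a} - {b}" by (auto simp: M_def)
  moreover have "b \<in> {1..n} - {a}" using b \<open>a \<noteq> b\<close> by simp
  ultimately have "swings n \<chi> a = subset_count M (\<lambda>U. \<not> \<chi> U \<and> \<chi> (insert a U))
      + subset_count M (\<lambda>U. \<not> \<chi> (insert b U) \<and> \<chi> (insert a (insert b U)))"
    using subset_count_split[of "{1..n} - {a}" b] by (simp add: swings_eq_subset_count)
  moreover have "int (subset_count M (\<lambda>U. \<not> \<chi> U \<and> \<chi> (insert a U)))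
      = int (subset_count M (\<lambda>U. \<chi> (insert a U))) - int (subset_count M \<chi>)"
    by (rule subset_count_diff[OF fin]) (rule win_insert[OF _ a])
  moreover have "int (subset_count M (\<lambda>U. \<not> \<chi> (insert b U) \<and> \<chi> (insert a (insert b U))))
      = int (subset_count M (\<lambda>U. \<chi> (insert a (insert b U))))
        - int (subset_count M (\<lambda>U. \<chi> (insert b U)))"
  proof (rule subset_count_diff[OF fin])
    fix U assume "U \<subseteq> M" "\<chi> (insert b U)"
    moreover from \<open>U \<subseteq> M\<close> have "insert b U \<subseteq> {1..n}" using b by (auto simp: M_def)
    ultimately show "\<chi> (insert a (insert b U))" using simple_game_insert[OF game _ a] by blast
  qed
  ultimately show ?thesis by simp
qed

lemma swings_ge_restricted_edges:
  assumes game: "simple_game n \<chi>" and a: "a \<in> {1..n}" and b: "b \<in> {1..n}" and "a \<noteq> b"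
    and j: "j \<in> {1..n} - {a, b}"
  shows "subset_count ({1..n} - {a, b} - {j}) (\<lambda>U. \<chi> (insert a U) \<noteq> \<chi> (insert a (insert j U)))
       + subset_count ({1..n} - {a, b} - {j}) (\<lambda>U. \<chi> (insert b U) \<noteq> \<chi> (insert b (insert j U)))
       \<le> swings n \<chi> j"
proof -
  define P where "P = (\<lambda>U. \<not> \<chi> U \<and> \<chi> (insert j U))"
  define R where "R = {1..n} - {a, b} - {j}"
  text \<open>By monotonicity, j swings at U + c exactly when it changes the game restricted to c.\<close>
  have restricted: "P (insert c U) = (\<chi> (insert c U) \<noteq> \<chi> (insert c (insert j U)))"
    if "U \<subseteq> R" "c \<in> {1..n}" for U c
  proof -
    have "insert c U \<subseteq> {1..n}" using that by (auto simp: R_def)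
    then have "\<chi> (insert c U) \<Longrightarrow> \<chi> (insert j (insert c U))"
      using simple_game_insert[OF game] j by blast
    then show ?thesis unfolding P_def by (metis insert_commute)
  qed
  have split_a: "subset_count ({1..n} - {j}) P
      = subset_count ({1..n} - {j} - {a}) P + subset_count ({1..n} - {j} - {a}) (\<lambda>U. P (insert a U))"
    by (rule subset_count_split) (use a j in auto)
  have split_b: "subset_count ({1..n} - {j} - {a}) Q
      = subset_count R Q + subset_count R (\<lambda>U. Q (insert b U))" for Q
  proof -
    have "R = {1..n} - {j} - {a} - {b}" by (auto simp: R_def)
    moreover have "b \<in> {1..n} - {j} - {a}" using b j \<open>a \<noteq> b\<close> by auto
    ultimately show ?thesis using subset_count_split[of "{1..n} - {j} - {a}" b Q] by simp
  qed
  have "subset_count R (\<lambda>U. P (insert a U)) + subset_count R (\<lambda>U. P (insert b U))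
      \<le> subset_count ({1..n} - {j}) P"
    unfolding split_a split_b by simp
  moreover have "subset_count R (\<lambda>U. P (insert c U))
      = subset_count R (\<lambda>U. \<chi> (insert c U) \<noteq> \<chi> (insert c (insert j U)))" if "c \<in> {1..n}" for c
    by (rule subset_count_cong, rule restricted[OF _ that])
  ultimately show ?thesis
    using a b by (simp add: swings_eq_subset_count P_def R_def)
qed

lemma sum_swings_ge_boundaries:
  assumes "simple_game n \<chi>" "a \<in> {1..n}" "b \<in> {1..n}" "a \<noteq> b"
  shows "boundary ({1..n} - {a, b}) (\<lambda>U. \<chi> (insert a U))
       + boundary ({1..n} - {a, b}) (\<lambda>U. \<chi> (insert b U))
       \<le> (\<Sum>j\<in>{1..n} - {a, b}. swings n \<chi> j)"
  unfolding boundary_def sum.distrib[symmetric]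
  by (rule sum_mono) (use swings_ge_restricted_edges[OF assms] in simp)

text \<open>Here e = f_a - f_b, and the boundary bound S K \<ge> 2 e (K - e) is compared with the
  deviation A \<ge> |x - 3y| of the swing numbers x, y of a and b from ratio 3 : 1.\<close>
lemma deviation_inequality:
  fixes x y S f1 f2 K A :: real
  assumes K: "K > 0" and xy: "x - y = 2*f1 - 2*f2" and y: "y \<ge> 0" and x: "x \<le> 2*K"
    and f1: "0 \<le> f1" "f1 \<le> K" and f2: "0 \<le> f2" "f2 \<le> K"
    and S: "2*f1*(K-f1) + 2*f2*(K-f2) \<le> S*K"
    and A: "x - 3*y \<le> A" "3*y - x \<le> A"
  shows "x + y \<le> 3*A + 8*S"
proof (cases "f1 \<le> f2")
  case True
  have "0 \<le> f1*(K-f1)" "0 \<le> f2*(K-f2)" using f1 f2 by simp_all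
  then have "0 \<le> S*K" using S by linarith
  then have "0 \<le> S" using K by (simp add: zero_le_mult_iff)
  then show ?thesis using A y xy True by linarith
next
  case False
  define e where "e = f1 - f2"
  have e: "0 < e" "e \<le> K" using False f1 f2 by (auto simp: e_def)
  have "f1*(K-f1) + f2*(K-f2) - e*(K-e) = 2*f2*(K-f1)" by (simp add: e_def algebra_simps)
  moreover have "0 \<le> 2*f2*(K-f1)" using f1 f2 by simp
  ultimately have SK: "2*e*(K-e) \<le> S*K" using S by linarith
  have xe: "x = y + 2*e" using xy by (simp add: e_def)
  have half: "e/2 \<le> S" if "e \<le> 2*K/3"
  proof -
    have "e*(K/4) \<le> e*(K-e)" using that e by (intro mult_left_mono) auto
    then have "(e/2)*K \<le> S*K" using SK by (simp add: algebra_simps)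
    then show ?thesis using K by simp
  qed
  show ?thesis
  proof (cases "e \<le> 2*K/3")
    case True
    then show ?thesis using half A xe y by linarith
  next
    case False
    have "(K-e)*(K-e) \<le> (K/3)*(K/3)" using False e by (intro mult_mono) auto
    then have "8*(K*K) + 9*(e*e) \<le> 18*(K*e)" by (simp add: algebra_simps)
    moreover have "0 \<le> e*e" by simp
    ultimately have "8*(K*K) + 8*(e*e) \<le> 18*(K*e)" by linarith
    then have "K*(8*K - 10*e) \<le> 8*e*(K-e)" by (simp add: algebra_simps)
    then have "(8*K - 10*e)*K \<le> (4*S)*K" using SK by (simp add: algebra_simps)
    then have "8*K - 10*e \<le> 4*S" using K by simp
    then show ?thesis using A xe x by linarith
  qed
qed

lemma distance_inequality:
  fixes x y S f1 f2 K :: real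
  assumes "K > 0" "x - y = 2*f1 - 2*f2" "y \<ge> 0" "x \<le> 2*K"
    and "0 \<le> f1" "f1 \<le> K" "0 \<le> f2" "f2 \<le> K"
    and "2*f1*(K-f1) + 2*f2*(K-f2) \<le> S*K"
  shows "x + y + S \<le> 9 * (\<bar>x - 3/4*(x+y+S)\<bar> + \<bar>y - 1/4*(x+y+S)\<bar> + S)"
proof -
  define H where "H = x + y + S"
  define p where "p = \<bar>x - 3/4*H\<bar>"
  define q where "q = \<bar>y - 1/4*H\<bar>"
  have "x - 3*y \<le> p + 3*q" "3*y - x \<le> p + 3*q"
    unfolding p_def q_def by (simp_all add: abs_if)
  then have "x + y \<le> 3*(p + 3*q) + 8*S"
    by (rule deviation_inequality[OF assms])
  moreover have "0 \<le> p" by (simp add: p_def)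
  ultimately have "H \<le> 9 * (p + q + S)" unfolding H_def by (simp add: algebra_simps)
  then show ?thesis by (simp add: H_def p_def q_def)
qed

lemma swing_distance_bound:
  assumes game: "simple_game n \<chi>" and a: "a \<in> {1..n}" and b: "b \<in> {1..n}" and ab: "a \<noteq> b"
  defines "x \<equiv> real (swings n \<chi> a)" and "y \<equiv> real (swings n \<chi> b)"
    and "S \<equiv> (\<Sum>j\<in>{1..n} - {a, b}. real (swings n \<chi> j))"
  shows "x + y + S \<le> 9 * (\<bar>x - 3/4*(x+y+S)\<bar> + \<bar>y - 1/4*(x+y+S)\<bar> + S)"
proof -
  define M where "M = {1..n} - {a, b}"
  define K :: real where "K = 2 ^ card M"
  have fin: "finite M" by (simp add: M_def)
  define fa where "fa = real (subset_count M (\<lambda>U. \<chi> (insert a U)))"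
  define fb where "fb = real (subset_count M (\<lambda>U. \<chi> (insert b U)))"
  define f0 where "f0 = real (subset_count M \<chi>)"
  define fab where "fab = real (subset_count M (\<lambda>U. \<chi> (insert a (insert b U))))"
  have bounded: "real (subset_count M P) \<le> K" for P
    using subset_count_le_pow[OF fin, of P] unfolding K_def by (simp add: of_nat_le_iff[symmetric])
  have x_eq: "x = fa - f0 + fab - fb"
    using arg_cong[OF swings_via_pair[OF game a b ab], of real_of_int]
    by (simp add: x_def fa_def fb_def f0_def fab_def M_def)
  have y_eq: "y = fb - f0 + fab - fa"
    using arg_cong[OF swings_via_pair[OF game b a ab[symmetric]], of real_of_int]
    by (simp add: y_def fa_def fb_def f0_def fab_def M_def insert_commute)
  have "real (boundary M (\<lambda>U. \<chi> (insert a U))) + real (boundary M (\<lambda>U. \<chi> (insert b U))) \<le> S"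
    using sum_swings_ge_boundaries[OF game a b ab]
    unfolding S_def M_def of_nat_sum[symmetric] of_nat_add[symmetric] of_nat_le_iff .
  then have "2*fa*(K-fa) + 2*fb*(K-fb) \<le> S*K"
    using edge_isoperimetric[OF fin, of "\<lambda>U. \<chi> (insert a U)"]
      edge_isoperimetric[OF fin, of "\<lambda>U. \<chi> (insert b U)"]
      mult_right_mono[of _ S K] unfolding fa_def fb_def K_def
    by (smt (verit) distrib_right zero_le_power)
  moreover have "x \<le> 2*K" using x_eq bounded unfolding fa_def fab_def f0_def fb_def
    by (smt (verit) of_nat_0_le_iff)
  ultimately show ?thesis
    by (intro distance_inequality[of K x y fa fb])
      (use x_eq y_eq bounded in \<open>auto simp: K_def y_def fa_def fb_def\<close>)
qed

lemma sum_split_pair: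
  assumes "finite A" "a \<in> A" "b \<in> A" "a \<noteq> b"
  shows "(\<Sum>i\<in>A. F i) = F a + F b + (\<Sum>i\<in>A - {a, b}. F i)"
proof -
  have "(\<Sum>i\<in>A. F i) = F a + (\<Sum>i\<in>A - {a}. F i)"
    by (rule sum.remove) (use assms in simp_all)
  also have "(\<Sum>i\<in>A - {a}. F i) = F b + (\<Sum>i\<in>A - {a} - {b}. F i)"
    by (rule sum.remove) (use assms in auto)
  also have "A - {a} - {b} = A - {a, b}" by auto
  finally show ?thesis by (simp add: add.assoc)
qed

theorem mainTheorem7:
  fixes n :: nat and \<chi> :: "nat set \<Rightarrow> bool" and d :: "nat \<Rightarrow> real"
  assumes "n \<ge> 2"
    and "d = (\<lambda>i. if i = 1 then 3/4 else if i = 2 then 1/4 else 0)"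
    and "simple_game n \<chi>"
  shows "(\<Sum>i\<in>{1..n}. \<bar>banzhaf n \<chi> i - d i\<bar>) \<ge> 1/9"
proof -
  define \<eta> where "\<eta> i = real (swings n \<chi> i)" for i
  define S where "S = (\<Sum>j\<in>{1..n} - {1, 2}. \<eta> j)"
  define H where "H = (\<Sum>k\<in>{1..n}. \<eta> k)"
  have players: "1 \<in> {1..n}" "2 \<in> {1..n}" using assms(1) by auto
  note split = sum_split_pair[OF finite_atLeastAtMost players, simplified]
  have "0 \<le> H" by (simp add: H_def \<eta>_def sum_nonneg)
  have banzhaf_eq: "banzhaf n \<chi> i = \<eta> i / H" for i
    by (simp add: banzhaf_def H_def \<eta>_def)
  have bound: "H \<le> 9 * (\<bar>\<eta> 1 - 3/4*H\<bar> + \<bar>\<eta> 2 - 1/4*H\<bar> + S)"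
    using swing_distance_bound[OF assms(3) players] split[of \<eta>]
    unfolding H_def S_def \<eta>_def by simp
  have "(\<Sum>j\<in>{1..n} - {1, 2}. \<bar>banzhaf n \<chi> j - d j\<bar>) = S / H"
    unfolding S_def sum_divide_distrib
    by (rule sum.cong) (use \<open>0 \<le> H\<close> in \<open>auto simp: banzhaf_eq assms(2) \<eta>_def\<close>)
  then have distance: "(\<Sum>i\<in>{1..n}. \<bar>banzhaf n \<chi> i - d i\<bar>)
      = \<bar>\<eta> 1 / H - 3/4\<bar> + \<bar>\<eta> 2 / H - 1/4\<bar> + S / H"
    by (simp add: split banzhaf_eq assms(2))
  show ?thesis
  proof (cases "H = 0")
    case True
    then show ?thesis unfolding distance by simp
  next
    case False
    with \<open>0 \<le> H\<close> have "0 < H" by simp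
    have scale: "\<bar>u / H - c\<bar> = \<bar>u - c*H\<bar> / H" for u c
    proof -
      have "u / H - c = (u - c*H) / H" using \<open>0 < H\<close> by (simp add: field_simps)
      then show ?thesis using \<open>0 < H\<close> by simp
    qed
    have "1/9 \<le> (\<bar>\<eta> 1 - 3/4*H\<bar> + \<bar>\<eta> 2 - 1/4*H\<bar> + S) / H"
      using bound \<open>0 < H\<close> by (simp add: field_simps)
    then show ?thesis unfolding distance scale add_divide_distrib .
  qed
qed

end
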